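(* Under the standing setup with $\mathrm{Var}(X_N)>0$, suppose contextual reinforcement holds: $\delta_W\cdot\delta_B\ge 0$. Then: (i) if $D_{ER}\ge D_{NM}$, then $0\le D_{NM}\le D\le\min\{D^+_{MOB},D_{ER}\}$; (ii) if $D_{ER}\le D_{NM}$, then $\max\{D^-_{MOB},D_{ER}\}\le D\le D_{NM}\le 0$; (iii) the bounds in (i) and (ii) are sharp under the assumption $\delta_W\delta_B\ge 0$ (absent additional information).
   Context: Let $(X,Y,N)$ be a random triple with $X\in\{0,1\}$, $Y$ real-valued, $N$ taking values in a finite set $\mathcal N$. Write $p_n=\Pr(N=n)$, $X_n=\mathbb E[X\mid N=n]$, $Y_n=\mathbb E[Y\mid N=n]$, $X_N=\mathbb E[X\mid N]$, $Y_N=\mathbb E[Y\mid N]$. Assume some $n$ has $p_n>0$ and $X_n\in(0,1)$, and fix reals $\underline Y\le\overline Y$ with $\mathbb E[Y\mid X=x,N=n]\in[\underline Y,\overline Y]$ whenever $\Pr(X=x,N=n)>0$. $D=\mathbb E[Y\mid X=1]-\mathbb E[Y\mid X=0]$; $\delta_B=\mathbb E[\mathrm{Cov}(Y,X\mid N)]$; $\delta_W=\mathbb E[\mathrm{Cov}(Y,X_N\mid X)]$; $D_{ER}=\mathrm{Cov}(Y_N,X_N)/\mathrm{Var}(X_N)$; $D_{NM}=\mathbb E[X_NY_N]/\mathbb E[X_N]-\mathbb E[(1-X_N)Y_N]/\mathbb E[1-X_N]$; $D^+_{MOB}=\big(\mathbb E[\min\{Y_N-\underline Y(1-X_N),\overline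 Y X_N\}]-\mathbb E[X]\mathbb E[Y]\big)/\mathrm{Var}(X)$, $D^-_{MOB}=\big(\mathbb E[Y](1-\mathbb E[X])-\mathbb E[\min\{Y_N-\underline Y X_N,\overline Y(1-X_N)\}]\big)/\mathrm{Var}(X)$. Sharpness under an assumption $\mathcal A$: the parameter lies in the interval for every joint distribution satisfying the standing assumptions and $\mathcal A$, and every value in the interval is attained by some joint distribution of $(X,Y,N)$ with the same observed $(p_n,X_n,Y_n)_n$, satisfying the standing bound and $\mathcal A$. *)

theory Defs
  imports "HOL-Probability.Probability"
begin

text \<open>The joint law of (X,Y,N) is a probability measure on bool \<times> real \<times> 'n,
  with X = True meaning X = 1. All quantities below depend only on this law.\<close>

type_synonym 'n outcome = "bool \<times> real \<times> 'n"

definition Xv :: "'n outcome \<Rightarrow> real" where "Xv w = (if fst w then 1 else 0)"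
definition Yv :: "'n outcome \<Rightarrow> real" where "Yv w = fst (snd w)"
definition Nv :: "'n outcome \<Rightarrow> 'n" where "Nv w = snd (snd w)"

definition ex :: "'a measure \<Rightarrow> ('a \<Rightarrow> real) \<Rightarrow> real" where
  "ex P f = (\<integral>w. f w \<partial>P)"

text \<open>Conditional expectation given an event: E[f 1_A]/Pr(A) (0 if Pr(A) = 0).\<close>
definition cexp :: "'a measure \<Rightarrow> ('a \<Rightarrow> real) \<Rightarrow> 'a set \<Rightarrow> real" where
  "cexp P f A = (\<integral>w. indicator A w * f w \<partial>P) / measure P A"

definition var :: "'a measure \<Rightarrow> ('a \<Rightarrow> real) \<Rightarrow> real" where
  "var P f = ex P (\<lambda>w. (f w - ex P f)\<^sup>2)"

definition cov :: "'a measure \<Rightarrow> ('a \<Rightarrow> real) \<Rightarrow> ('a \<Rightarrow> real) \<Rightarrow> real" where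
  "cov P f g = ex P (\<lambda>w. (f w - ex P f) * (g w - ex P g))"

definition ccov :: "'a measure \<Rightarrow> ('a \<Rightarrow> real) \<Rightarrow> ('a \<Rightarrow> real) \<Rightarrow> 'a set \<Rightarrow> real" where
  "ccov P f g A = cexp P (\<lambda>w. (f w - cexp P f A) * (g w - cexp P g A)) A"

definition pN :: "'n outcome measure \<Rightarrow> 'n \<Rightarrow> real" where
  "pN P n = measure P {w. Nv w = n}"
definition XN :: "'n outcome measure \<Rightarrow> 'n \<Rightarrow> real" where
  "XN P n = cexp P Xv {w. Nv w = n}"
definition YN :: "'n outcome measure \<Rightarrow> 'n \<Rightarrow> real" where
  "YN P n = cexp P Yv {w. Nv w = n}"

definition XNrv :: "'n outcome measure \<Rightarrow> 'n outcome \<Rightarrow> real" where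
  "XNrv P w = XN P (Nv w)"
definition YNrv :: "'n outcome measure \<Rightarrow> 'n outcome \<Rightarrow> real" where
  "YNrv P w = YN P (Nv w)"

definition joint_law :: "('n::finite) outcome measure \<Rightarrow> bool" where
  "joint_law P \<longleftrightarrow> prob_space P \<and>
     sets P = sets (count_space UNIV \<Otimes>\<^sub>M (borel \<Otimes>\<^sub>M count_space UNIV)) \<and>
     integrable P Yv"

definition cond_mean_bounds :: "'n outcome measure \<Rightarrow> real \<Rightarrow> real \<Rightarrow> bool" where
  "cond_mean_bounds P yl yh \<longleftrightarrow>
     (\<forall>x n. measure P {w. fst w = x \<and> Nv w = n} > 0 \<longrightarrow>
        yl \<le> cexp P Yv {w. fst w = x \<and> Nv w = n} \<and>
        cexp P Yv {w. fst w = x \<and> Nv w = n} \<le> yh)"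

definition same_observed :: "'n outcome measure \<Rightarrow> 'n outcome measure \<Rightarrow> bool" where
  "same_observed P Q \<longleftrightarrow> (\<forall>n. pN Q n = pN P n \<and> XN Q n = XN P n \<and> YN Q n = YN P n)"

definition Dgap :: "'n outcome measure \<Rightarrow> real" where
  "Dgap P = cexp P Yv {w. fst w} - cexp P Yv {w. \<not> fst w}"

definition deltaB :: "('n::finite) outcome measure \<Rightarrow> real" where
  "deltaB P = (\<Sum>n\<in>UNIV. pN P n * ccov P Yv Xv {w. Nv w = n})"
definition deltaW :: "'n outcome measure \<Rightarrow> real" where
  "deltaW P = (\<Sum>x\<in>UNIV. measure P {w. fst w = x} * ccov P Yv (XNrv P) {w. fst w = x})"

definition DER :: "'n outcome measure \<Rightarrow> real" where
  "DER P = cov P (YNrv P) (XNrv P) / var P (XNrv P)"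

definition DNM :: "'n outcome measure \<Rightarrow> real" where
  "DNM P = ex P (\<lambda>w. XNrv P w * YNrv P w) / ex P (XNrv P)
         - ex P (\<lambda>w. (1 - XNrv P w) * YNrv P w) / ex P (\<lambda>w. 1 - XNrv P w)"

definition DMOBp :: "'n outcome measure \<Rightarrow> real \<Rightarrow> real \<Rightarrow> real" where
  "DMOBp P yl yh = (ex P (\<lambda>w. min (YNrv P w - yl * (1 - XNrv P w)) (yh * XNrv P w))
                    - ex P Xv * ex P Yv) / var P Xv"

definition DMOBm :: "'n outcome measure \<Rightarrow> real \<Rightarrow> real \<Rightarrow> real" where
  "DMOBm P yl yh = (ex P Yv * (1 - ex P Xv)
                    - ex P (\<lambda>w. min (YNrv P w - yl * XNrv P w) (yh * (1 - XNrv P w)))) / var P Xv"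

end

theory Submission
  imports Defs
begin

(*
  The law of (X, Y, N) enters only through the cell probabilities Pr(X = x, N = n) and the
  cell moments E[Y; X = x, N = n]. The observed data fix all of them except how E[Y; N = n]
  splits between the two cells, i.e. the treated moment s\<^sub>n = E[XY; N = n]. The bounds on
  the cell means confine each s\<^sub>n to an interval, independently across n, and
  D = (\<Sum>\<^sub>n s\<^sub>n - E X E Y) / Var X; hence D ranges over exactly
  [D\<^sup>-\<^sub>M\<^sub>O\<^sub>B, D\<^sup>+\<^sub>M\<^sub>O\<^sub>B], every value being realised by a law under which Y is constant on
  each cell. The split s\<^sub>n = p\<^sub>n X\<^sub>n Y\<^sub>n is admissible, so D\<^sub>N\<^sub>M lies in this interval too.

  With C = Cov(Y\<^sub>N, X\<^sub>N), V = Var X and W = Var X\<^sub>N one has \<delta>\<^sub>B = D V - C and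
  \<delta>\<^sub>W = C - D W, so contextual reinforcement says exactly that D lies between
  D\<^sub>N\<^sub>M = C / V and D\<^sub>E\<^sub>R = C / W. Overlap gives W < V, so D\<^sub>N\<^sub>M \<le> D\<^sub>E\<^sub>R iff C \<ge> 0.
  Intersecting the two intervals yields the bounds, and their sharpness.
*)

lemma sum_UNIV_bool: "(\<Sum>x\<in>UNIV. h x) = h True + h False"
  by (simp add: UNIV_bool add.commute)

lemma sum_interpolate:
  fixes lo hi :: "'a \<Rightarrow> real"
  assumes "\<And>n. n \<in> A \<Longrightarrow> lo n \<le> hi n" and "sum lo A \<le> T" and "T \<le> sum hi A"
  shows "\<exists>f. (\<forall>n\<in>A. lo n \<le> f n \<and> f n \<le> hi n) \<and> sum f A = T"
proof -
  have "\<exists>\<theta>. 0 \<le> \<theta> \<and> \<theta> \<le> 1 \<and> T = sum lo A + \<theta> * (sum hi A - sum lo A)"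
  proof (cases "sum hi A = sum lo A")
    case True
    then show ?thesis using assms(2,3) by (intro exI[of _ 0]) simp
  next
    case False
    then have "0 < sum hi A - sum lo A" using assms(2,3) by simp
    then show ?thesis
      using assms(2,3) by (intro exI[of _ "(T - sum lo A) / (sum hi A - sum lo A)"]) (simp add: field_simps)
  qed
  then obtain \<theta> where \<theta>: "0 \<le> \<theta>" "\<theta> \<le> 1" "T = sum lo A + \<theta> * (sum hi A - sum lo A)"
    by blast
  have "\<theta> * (hi n - lo n) \<le> hi n - lo n" "0 \<le> \<theta> * (hi n - lo n)" if "n \<in> A" for n
    using assms(1)[OF that] \<theta>(1,2) by (simp_all add: mult_left_le_one_le)
  then have "\<forall>n\<in>A. lo n \<le> lo n + \<theta> * (hi n - lo n) \<and> lo n + \<theta> * (hi n - lo n) \<le> hi n"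
    by fastforce
  moreover have "(\<Sum>n\<in>A. lo n + \<theta> * (hi n - lo n)) = T"
    unfolding \<theta>(3) by (simp add: sum.distrib sum_subtractf right_diff_distrib sum_distrib_left)
  ultimately show ?thesis
    by (intro exI[of _ "\<lambda>n. lo n + \<theta> * (hi n - lo n)"]) simp
qed

lemma sum_centered_product:
  fixes q s X :: "'n::finite \<Rightarrow> real"
  assumes "(\<Sum>n\<in>UNIV. q n) \<noteq> 0"
  shows "(\<Sum>n\<in>UNIV. (X n - (\<Sum>n\<in>UNIV. X n * q n) / (\<Sum>n\<in>UNIV. q n))
                     * (s n - (\<Sum>n\<in>UNIV. s n) / (\<Sum>n\<in>UNIV. q n) * q n))
       = (\<Sum>n\<in>UNIV. X n * s n) - (\<Sum>n\<in>UNIV. s n) * (\<Sum>n\<in>UNIV. X n * q n) / (\<Sum>n\<in>UNIV. q n)"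
proof -
  define m where "m = (\<Sum>n\<in>UNIV. q n)"
  define c where "c = (\<Sum>n\<in>UNIV. s n) / m"
  define d where "d = (\<Sum>n\<in>UNIV. X n * q n) / m"
  have "(\<Sum>n\<in>UNIV. (X n - d) * (s n - c * q n))
      = (\<Sum>n\<in>UNIV. X n * s n - d * s n - c * (X n * q n) + c * d * q n)"
    by (intro sum.cong) (simp_all add: algebra_simps)
  also have "\<dots> = (\<Sum>n\<in>UNIV. X n * s n) - d * (\<Sum>n\<in>UNIV. s n)
                     - c * (\<Sum>n\<in>UNIV. X n * q n) + c * d * m"
    unfolding m_def by (simp add: sum.distrib sum_subtractf sum_distrib_left[symmetric])
  also have "\<dots> = (\<Sum>n\<in>UNIV. X n * s n) - (\<Sum>n\<in>UNIV. s n) * (\<Sum>n\<in>UNIV. X n * q n) / m"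
    using assms unfolding c_def d_def m_def[symmetric] by (simp add: field_simps)
  finally show ?thesis
    unfolding c_def d_def m_def .
qed

lemma mult_nonneg_iff_between:
  fixes C d V W :: real
  assumes "0 < V" "0 < W"
  shows "0 \<le> (C - d * W) * (d * V - C) \<longleftrightarrow> (C / V \<le> d \<and> d \<le> C / W) \<or> (C / W \<le> d \<and> d \<le> C / V)"
  using assms by (auto simp: zero_le_mult_iff divide_le_eq le_divide_eq)

lemma divide_le_divide_larger_iff:
  fixes C V W :: real
  assumes "0 < W" "W < V"
  shows "C / V \<le> C / W \<longleftrightarrow> 0 \<le> C"
proof -
  have "C / V \<le> C / W \<longleftrightarrow> C * W \<le> C * V"
    using assms by (simp add: field_simps)
  also have "\<dots> \<longleftrightarrow> 0 \<le> C"
    using assms by (auto simp: mult_le_cancel_left)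
  finally show ?thesis .
qed

lemma split_bounds_iff:
  fixes p X Y f yl yh :: real
  assumes "0 \<le> p"
  shows "(yl * (p * X) \<le> f \<and> f \<le> yh * (p * X) \<and> yl * (p * (1 - X)) \<le> p * Y - f
            \<and> p * Y - f \<le> yh * (p * (1 - X)))
     \<longleftrightarrow> (p * (Y - min (Y - yl * X) (yh * (1 - X))) \<le> f \<and> f \<le> p * min (Y - yl * (1 - X)) (yh * X))"
  unfolding right_diff_distrib[of p Y] min_mult_distrib_left
  using assms by (auto simp: min_def algebra_simps)

abbreviation outcome_space :: "('n::finite) outcome measure" where
  "outcome_space \<equiv> count_space UNIV \<Otimes>\<^sub>M (borel \<Otimes>\<^sub>M count_space UNIV)"

abbreviation cell :: "bool \<Rightarrow> 'n \<Rightarrow> 'n outcome set" where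
  "cell x n \<equiv> {w. fst w = x \<and> Nv w = n}"

lemma joint_law_prob_space: "joint_law P \<Longrightarrow> prob_space P"
  by (simp add: joint_law_def)

lemma joint_law_sets: "joint_law P \<Longrightarrow> sets P = sets outcome_space"
  by (simp add: joint_law_def)

lemma joint_law_space: "joint_law P \<Longrightarrow> space P = UNIV"
  using sets_eq_imp_space_eq[OF joint_law_sets] by (simp add: space_pair_measure)

lemma measurable_cell_function:
  "(\<lambda>w. g (fst w) (Nv w) :: real) \<in> borel_measurable (outcome_space :: ('n::finite) outcome measure)"
proof -
  have "fst \<in> measurable (outcome_space :: 'n outcome measure) (count_space UNIV)"
    by simp
  moreover have "Nv \<in> measurable (outcome_space :: 'n outcome measure) (count_space UNIV)"
    unfolding Nv_def by simp
  ultimately show ?thesis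
    by (intro measurable_compose_countable'[where g=fst and I=UNIV and f="\<lambda>x w. g x (Nv w)"]
        measurable_compose_countable'[where g=Nv and I=UNIV and f="\<lambda>n w. g _ n"]) auto
qed

lemma joint_law_measurable_cell_function:
  "joint_law P \<Longrightarrow> (\<lambda>w. g (fst w) (Nv w) :: real) \<in> borel_measurable P"
  using measurable_cell_function measurable_cong_sets[OF joint_law_sets refl] by blast

lemma sets_cell_event:
  assumes "joint_law P" shows "{w. R (fst w) (Nv w)} \<in> sets P"
proof -
  let ?f = "\<lambda>w. if R (fst w) (Nv w) then 1 else 0 :: real"
  have "?f -` {1} \<inter> space P \<in> sets P"
    using joint_law_measurable_cell_function[OF assms, of "\<lambda>x n. if R x n then 1 else 0"]
    by (intro measurable_sets) auto
  also have "?f -` {1} \<inter> space P = {w. R (fst w) (Nv w)}"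
    using joint_law_space[OF assms] by (auto split: if_splits)
  finally show ?thesis .
qed

definition cell_prob :: "'n outcome measure \<Rightarrow> bool \<Rightarrow> 'n \<Rightarrow> real" where
  "cell_prob P x n = measure P (cell x n)"

definition cell_moment :: "'n outcome measure \<Rightarrow> bool \<Rightarrow> 'n \<Rightarrow> real" where
  "cell_moment P x n = (\<integral>w. indicator (cell x n) w * Yv w \<partial>P)"

lemma cell_prob_nonneg: "0 \<le> cell_prob P x n"
  by (simp add: cell_prob_def)

lemma cell_function_eq_sum:
  fixes g :: "bool \<Rightarrow> 'n::finite \<Rightarrow> real"
  shows "g (fst w) (Nv w) = (\<Sum>x\<in>UNIV. \<Sum>n\<in>UNIV. g x n * indicator (cell x n) w)"
proof -
  have "(\<Sum>n\<in>UNIV. g x n * indicator (cell x n) w) = (if x = fst w then g x (Nv w) else 0)" for x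
    by (simp add: indicator_def if_distrib[of "\<lambda>c. g x _ * c"] sum.If_cases[of UNIV] Int_def)
  then show ?thesis by simp
qed

lemma integrable_cell_function:
  assumes L: "joint_law P"
  shows "integrable P (\<lambda>w. g (fst w) (Nv w) :: real)"
proof -
  interpret prob_space P using joint_law_prob_space[OF L] .
  have "(\<lambda>w. g (fst w) (Nv w)) = (\<lambda>w. \<Sum>x\<in>UNIV. \<Sum>n\<in>UNIV. g x n * indicator (cell x n) w)"
    by (rule ext) (rule cell_function_eq_sum)
  moreover have "integrable P (\<lambda>w. \<Sum>x\<in>UNIV. \<Sum>n\<in>UNIV. g x n * indicator (cell x n) w)"
    using sets_cell_event[OF L]
    by (intro Bochner_Integration.integrable_sum integrable_mult_right integrable_real_indicator)
      (auto simp: emeasure_eq_measure)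
  ultimately show ?thesis
    by simp
qed

lemma ex_cell_function:
  assumes L: "joint_law P"
  shows "ex P (\<lambda>w. f (fst w) (Nv w) * Yv w + g (fst w) (Nv w))
       = (\<Sum>x\<in>UNIV. \<Sum>n\<in>UNIV. f x n * cell_moment P x n + g x n * cell_prob P x n)"
proof -
  interpret prob_space P using joint_law_prob_space[OF L] .
  let ?F = "\<lambda>x n w. f x n * (indicator (cell x n) w * Yv w) + g x n * indicator (cell x n) w"
  have cell: "cell x n \<in> sets P" for x n
    using sets_cell_event[OF L, of "\<lambda>x' n'. x' = x \<and> n' = n"] by simp
  have "integrable P Yv" using L by (simp add: joint_law_def)
  from integrable_mult_indicator[OF cell this]
  have int_moment: "integrable P (\<lambda>w. indicator (cell x n) w * Yv w)" for x n
    by simp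
  have int_prob: "integrable P (indicator (cell x n) :: _ \<Rightarrow> real)" for x n
    using cell by (simp add: emeasure_eq_measure)
  have "f (fst w) (Nv w) * Yv w + g (fst w) (Nv w) = (\<Sum>x\<in>UNIV. \<Sum>n\<in>UNIV. ?F x n w)" for w
  proof -
    have "(\<Sum>x\<in>UNIV. \<Sum>n\<in>UNIV. ?F x n w)
        = (\<Sum>x\<in>UNIV. \<Sum>n\<in>UNIV. f x n * indicator (cell x n) w) * Yv w
          + (\<Sum>x\<in>UNIV. \<Sum>n\<in>UNIV. g x n * indicator (cell x n) w)"
      by (simp only: sum.distrib sum_distrib_right mult.assoc)
    then show ?thesis by (simp only: cell_function_eq_sum[symmetric])
  qed
  then have "ex P (\<lambda>w. f (fst w) (Nv w) * Yv w + g (fst w) (Nv w))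
      = (\<Sum>x\<in>UNIV. \<Sum>n\<in>UNIV. integral\<^sup>L P (?F x n))"
    using int_moment int_prob
    by (simp add: ex_def Bochner_Integration.integral_sum Bochner_Integration.integrable_sum)
  also have "\<dots> = (\<Sum>x\<in>UNIV. \<Sum>n\<in>UNIV. f x n * cell_moment P x n + g x n * cell_prob P x n)"
    using int_moment int_prob joint_law_space[OF L] by (simp add: cell_moment_def cell_prob_def)
  finally show ?thesis .
qed

lemma cell_moment_null:
  assumes L: "joint_law P" and "cell_prob P x n = 0"
  shows "cell_moment P x n = 0"
proof -
  interpret prob_space P using joint_law_prob_space[OF L] .
  have "cell x n \<in> null_sets P"
    using assms sets_cell_event[OF L, of "\<lambda>x' n'. x' = x \<and> n' = n"]
    by (simp add: cell_prob_def emeasure_eq_measure null_sets_def)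
  from AE_not_in[OF this] show ?thesis
    unfolding cell_moment_def by (intro integral_eq_zero_AE) (auto elim!: AE_mp)
qed

lemma ex_cell_event:
  assumes L: "joint_law P" and h: "\<And>w. h w = f (fst w) (Nv w) * Yv w + g (fst w) (Nv w)"
  shows "ex P (\<lambda>w. indicator {w. R (fst w) (Nv w)} w * h w)
       = (\<Sum>x\<in>UNIV. \<Sum>n\<in>UNIV. if R x n then f x n * cell_moment P x n + g x n * cell_prob P x n else 0)"
proof -
  have "ex P (\<lambda>w. indicator {w. R (fst w) (Nv w)} w * h w)
      = ex P (\<lambda>w. (if R (fst w) (Nv w) then f (fst w) (Nv w) else 0) * Yv w
                 + (if R (fst w) (Nv w) then g (fst w) (Nv w) else 0))"
    by (rule arg_cong[where f="ex P"]) (auto simp: h indicator_def)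
  also have "\<dots> = (\<Sum>x\<in>UNIV. \<Sum>n\<in>UNIV. (if R x n then f x n else 0) * cell_moment P x n
                                        + (if R x n then g x n else 0) * cell_prob P x n)"
    by (rule ex_cell_function[OF L])
  finally show ?thesis by (auto intro!: sum.cong)
qed

lemma measure_cell_event:
  assumes "joint_law P"
  shows "measure P {w. R (fst w) (Nv w)}
       = (\<Sum>x\<in>UNIV. \<Sum>n\<in>UNIV. if R x n then cell_prob P x n else 0)"
  using ex_cell_event[OF assms, of "\<lambda>_. 1" "\<lambda>_ _. 0" "\<lambda>_ _. 1" R] joint_law_space[OF assms]
  by (simp add: ex_def cong: if_cong)

lemma cexp_cell_event:
  assumes "joint_law P" and "\<And>w. h w = f (fst w) (Nv w) * Yv w + g (fst w) (Nv w)"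
  shows "cexp P h {w. R (fst w) (Nv w)}
       = (\<Sum>x\<in>UNIV. \<Sum>n\<in>UNIV. if R x n then f x n * cell_moment P x n + g x n * cell_prob P x n else 0)
         / (\<Sum>x\<in>UNIV. \<Sum>n\<in>UNIV. if R x n then cell_prob P x n else 0)"
  using ex_cell_event[OF assms, of R] measure_cell_event[OF assms(1), of R]
  by (simp add: cexp_def ex_def)

lemma measure_arm:
  "joint_law P \<Longrightarrow> measure P {w. fst w = x} = (\<Sum>n\<in>UNIV. cell_prob P x n)"
  using measure_cell_event[of P "\<lambda>x' _. x' = x"] by (cases x) (simp_all add: sum_UNIV_bool)

lemma cexp_arm:
  assumes "joint_law P" and "\<And>w. h w = f (fst w) (Nv w) * Yv w + g (fst w) (Nv w)"
  shows "cexp P h {w. fst w = x}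
       = (\<Sum>n\<in>UNIV. f x n * cell_moment P x n + g x n * cell_prob P x n) / (\<Sum>n\<in>UNIV. cell_prob P x n)"
  using cexp_cell_event[OF assms, of "\<lambda>x' _. x' = x"] by (cases x) (simp_all add: sum_UNIV_bool)

lemma pN_cells: "joint_law P \<Longrightarrow> pN P n = cell_prob P True n + cell_prob P False n"
  using measure_cell_event[of P "\<lambda>_ n'. n' = n"] by (simp add: pN_def sum_UNIV_bool)

lemma cexp_stratum:
  assumes "joint_law P" and "\<And>w. h w = f (fst w) (Nv w) * Yv w + g (fst w) (Nv w)"
  shows "cexp P h {w. Nv w = n}
       = (f True n * cell_moment P True n + g True n * cell_prob P True n
          + (f False n * cell_moment P False n + g False n * cell_prob P False n)) / pN P n"
  using cexp_cell_event[OF assms, of "\<lambda>_ n'. n' = n"] pN_cells[OF assms(1)]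
  by (simp add: sum_UNIV_bool)

lemma cexp_cell:
  "joint_law P \<Longrightarrow> cexp P Yv (cell x n) = cell_moment P x n / cell_prob P x n"
  using cexp_cell_event[of P Yv "\<lambda>_ _. 1" "\<lambda>_ _. 0" "\<lambda>x' n'. x' = x \<and> n' = n"]
  by (cases x) (simp_all add: sum_UNIV_bool cell_prob_def)

lemma XN_cells: "joint_law P \<Longrightarrow> XN P n = cell_prob P True n / pN P n"
  using cexp_stratum[of P Xv "\<lambda>_ _. 0" "\<lambda>x _. if x then 1 else 0"] by (simp add: XN_def Xv_def)

lemma YN_cells:
  "joint_law P \<Longrightarrow> YN P n = (cell_moment P True n + cell_moment P False n) / pN P n"
  using cexp_stratum[of P Yv "\<lambda>_ _. 1" "\<lambda>_ _. 0"] by (simp add: YN_def)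

lemma cell_prob_True_eq: "joint_law P \<Longrightarrow> cell_prob P True n = pN P n * XN P n"
  using cell_prob_nonneg[of P True n] cell_prob_nonneg[of P False n]
  by (auto simp: XN_cells pN_cells)

lemma cell_prob_False_eq: "joint_law P \<Longrightarrow> cell_prob P False n = pN P n * (1 - XN P n)"
  using cell_prob_True_eq[of P n] pN_cells[of P n] by (simp add: algebra_simps)

lemma cell_moment_sum_eq:
  assumes L: "joint_law P"
  shows "cell_moment P True n + cell_moment P False n = pN P n * YN P n"
proof (cases "pN P n = 0")
  case True
  then have "cell_prob P True n = 0" "cell_prob P False n = 0"
    using pN_cells[OF L] cell_prob_nonneg[of P True n] cell_prob_nonneg[of P False n] by auto
  then show ?thesis using True cell_moment_null[OF L] by simp
qed (simp add: YN_cells[OF L])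

lemma XN_bounds: "joint_law P \<Longrightarrow> 0 \<le> XN P n \<and> XN P n \<le> 1"
  using cell_prob_nonneg[of P True n] cell_prob_nonneg[of P False n]
  by (auto simp: XN_cells pN_cells divide_le_eq_1)

lemma sum_pN: "joint_law P \<Longrightarrow> (\<Sum>n\<in>UNIV. pN P n) = 1"
  using measure_cell_event[of P "\<lambda>_ _. True"] joint_law_space[of P]
    prob_space.prob_space[OF joint_law_prob_space, of P]
  by (simp add: pN_cells sum.distrib sum_UNIV_bool)

lemma ex_fun_N: "joint_law P \<Longrightarrow> ex P (\<lambda>w. g (Nv w)) = (\<Sum>n\<in>UNIV. pN P n * g n)"
  using ex_cell_function[of P "\<lambda>_ _. 0" "\<lambda>_ n. g n"]
  by (simp add: sum_UNIV_bool pN_cells sum.distrib algebra_simps)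

lemma ex_cell_function_observed:
  assumes L: "joint_law P"
  shows "ex P (\<lambda>w. f (fst w) (Nv w) * Yv w + g (fst w) (Nv w))
       = (\<Sum>n\<in>UNIV. (f True n - f False n) * cell_moment P True n
            + pN P n * (f False n * YN P n + XN P n * g True n + (1 - XN P n) * g False n))"
proof -
  have s0: "cell_moment P False n = pN P n * YN P n - cell_moment P True n" for n
    using cell_moment_sum_eq[OF L, of n] by simp
  show ?thesis
    unfolding ex_cell_function[OF L] sum_UNIV_bool cell_prob_True_eq[OF L]
      cell_prob_False_eq[OF L] s0 sum.distrib[symmetric]
    by (intro sum.cong) (simp_all add: algebra_simps)
qed

lemma same_observed_eqs:
  "same_observed P Q \<Longrightarrow> pN Q = pN P \<and> XN Q = XN P \<and> YN Q = YN P"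
  by (simp add: same_observed_def fun_eq_iff)

lemma ex_Xv: "joint_law P \<Longrightarrow> ex P Xv = (\<Sum>n\<in>UNIV. pN P n * XN P n)"
  using ex_cell_function_observed[of P "\<lambda>_ _. 0" "\<lambda>x _. if x then 1 else 0"]
  by (simp add: Xv_def[abs_def])

lemma ex_Yv: "joint_law P \<Longrightarrow> ex P Yv = (\<Sum>n\<in>UNIV. pN P n * YN P n)"
  using ex_cell_function_observed[of P "\<lambda>_ _. 1" "\<lambda>_ _. 0"] by simp

lemma var_eq_cov_self: "var P f = cov P f f"
  by (simp add: var_def cov_def power2_eq_square)

lemma cov_fun_N:
  assumes L: "joint_law P"
  shows "cov P (\<lambda>w. a (Nv w)) (\<lambda>w. b (Nv w))
       = (\<Sum>n\<in>UNIV. pN P n * a n * b n) - (\<Sum>n\<in>UNIV. pN P n * a n) * (\<Sum>n\<in>UNIV. pN P n * b n)"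
proof -
  define A where "A = (\<Sum>n\<in>UNIV. pN P n * a n)"
  define B where "B = (\<Sum>n\<in>UNIV. pN P n * b n)"
  have "cov P (\<lambda>w. a (Nv w)) (\<lambda>w. b (Nv w)) = (\<Sum>n\<in>UNIV. pN P n * ((a n - A) * (b n - B)))"
    unfolding cov_def ex_fun_N[OF L, of a] ex_fun_N[OF L, of b] A_def[symmetric] B_def[symmetric]
    by (rule ex_fun_N[OF L])
  also have "\<dots> = (\<Sum>n\<in>UNIV. pN P n * a n * b n - B * (pN P n * a n) - A * (pN P n * b n)
                                 + A * B * pN P n)"
    by (intro sum.cong) (simp_all add: algebra_simps)
  also have "\<dots> = (\<Sum>n\<in>UNIV. pN P n * a n * b n) - B * A - A * B + A * B * (\<Sum>n\<in>UNIV. pN P n)"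
    by (simp add: sum.distrib sum_subtractf sum_distrib_left[symmetric] A_def B_def)
  finally show ?thesis using sum_pN[OF L] by (simp add: A_def B_def)
qed

lemma var_Xv:
  assumes L: "joint_law P"
  shows "var P Xv = ex P Xv * (1 - ex P Xv)"
proof -
  let ?e = "ex P Xv"
  have "var P Xv = (\<Sum>n\<in>UNIV. pN P n * (XN P n * (1 - ?e)\<^sup>2 + (1 - XN P n) * ?e\<^sup>2))"
    using ex_cell_function_observed[OF L, of "\<lambda>_ _. 0" "\<lambda>x _. ((if x then 1 else 0) - ?e)\<^sup>2"]
    by (simp add: var_def Xv_def)
  also have "\<dots> = (\<Sum>n\<in>UNIV. ((1 - ?e)\<^sup>2 - ?e\<^sup>2) * (pN P n * XN P n) + ?e\<^sup>2 * pN P n)"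
    by (intro sum.cong) (simp_all add: algebra_simps)
  also have "\<dots> = ((1 - ?e)\<^sup>2 - ?e\<^sup>2) * ?e + ?e\<^sup>2"
    by (simp add: sum.distrib sum_distrib_left[symmetric] ex_Xv[OF L] sum_pN[OF L])
  finally show ?thesis by (simp add: power2_eq_square algebra_simps)
qed

lemma cov_Yv_Xv:
  assumes L: "joint_law P"
  shows "cov P Yv Xv = (\<Sum>n\<in>UNIV. cell_moment P True n) - ex P Xv * ex P Yv"
proof -
  let ?e = "ex P Xv" and ?E = "ex P Yv"
  have "cov P Yv Xv = (\<Sum>n\<in>UNIV. cell_moment P True n
          + pN P n * (- ?e * YN P n - XN P n * ?E * (1 - ?e) + (1 - XN P n) * ?E * ?e))"
    using ex_cell_function_observed[OF L, of "\<lambda>x _. (if x then 1 else 0) - ?e"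
        "\<lambda>x _. - ?E * ((if x then 1 else 0) - ?e)"]
    by (simp add: cov_def Xv_def algebra_simps)
  also have "\<dots> = (\<Sum>n\<in>UNIV. cell_moment P True n - ?e * (pN P n * YN P n)
                     - ?E * (pN P n * XN P n) + ?E * ?e * pN P n)"
    by (intro sum.cong) (simp_all add: algebra_simps)
  also have "\<dots> = (\<Sum>n\<in>UNIV. cell_moment P True n) - ?e * ?E - ?E * ?e + ?E * ?e"
    by (simp add: sum.distrib sum_subtractf sum_distrib_left[symmetric] ex_Xv[OF L] ex_Yv[OF L]
        sum_pN[OF L])
  finally show ?thesis by simp
qed

lemma XNrv_eq: "XNrv P = (\<lambda>w. XN P (Nv w))"
  by (simp add: XNrv_def[abs_def])

lemma YNrv_eq: "YNrv P = (\<lambda>w. YN P (Nv w))"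
  by (simp add: YNrv_def[abs_def])

lemma var_XNrv:
  "joint_law P \<Longrightarrow> var P (XNrv P) = (\<Sum>n\<in>UNIV. pN P n * (XN P n)\<^sup>2) - (ex P Xv)\<^sup>2"
  unfolding var_eq_cov_self XNrv_eq
  by (simp add: cov_fun_N ex_Xv power2_eq_square mult.assoc)

lemma cov_YNrv_XNrv:
  "joint_law P \<Longrightarrow> cov P (YNrv P) (XNrv P)
     = (\<Sum>n\<in>UNIV. pN P n * XN P n * YN P n) - ex P Xv * ex P Yv"
  unfolding XNrv_eq YNrv_eq
  by (simp add: cov_fun_N ex_Xv ex_Yv algebra_simps)

lemma sum_cell_prob_True: "joint_law P \<Longrightarrow> (\<Sum>n\<in>UNIV. cell_prob P True n) = ex P Xv"
  by (simp add: cell_prob_True_eq ex_Xv)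

lemma sum_cell_prob_False: "joint_law P \<Longrightarrow> (\<Sum>n\<in>UNIV. cell_prob P False n) = 1 - ex P Xv"
  by (simp add: cell_prob_False_eq ex_Xv sum_pN algebra_simps sum_subtractf)

lemma sum_cell_moment_False:
  "joint_law P \<Longrightarrow> (\<Sum>n\<in>UNIV. cell_moment P False n) = ex P Yv - (\<Sum>n\<in>UNIV. cell_moment P True n)"
proof -
  assume L: "joint_law P"
  have "(\<Sum>n\<in>UNIV. cell_moment P True n) + (\<Sum>n\<in>UNIV. cell_moment P False n) = ex P Yv"
    by (simp add: ex_Yv[OF L] cell_moment_sum_eq[OF L] flip: sum.distrib)
  then show ?thesis by simp
qed

lemma Dgap_eq:
  assumes L: "joint_law P" and e: "0 < ex P Xv" "ex P Xv < 1"
  shows "Dgap P = cov P Yv Xv / var P Xv"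
proof -
  let ?S1 = "\<Sum>n\<in>UNIV. cell_moment P True n"
  have side: "cexp P Yv {w. fst w = x} = (\<Sum>n\<in>UNIV. cell_moment P x n) / (\<Sum>n\<in>UNIV. cell_prob P x n)" for x
    using cexp_arm[OF L, of Yv "\<lambda>_ _. 1" "\<lambda>_ _. 0"] by simp
  have treated: "cexp P Yv {w. fst w} = ?S1 / ex P Xv"
    using side[of True] by (simp add: sum_cell_prob_True[OF L])
  have control: "cexp P Yv {w. \<not> fst w} = (ex P Yv - ?S1) / (1 - ex P Xv)"
    using side[of False] by (simp add: sum_cell_prob_False[OF L] sum_cell_moment_False[OF L])
  show ?thesis
    using e unfolding Dgap_def treated control cov_Yv_Xv[OF L] var_Xv[OF L] by (simp add: field_simps)
qed

lemma DNM_eq: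
  assumes L: "joint_law P" and e: "0 < ex P Xv" "ex P Xv < 1"
  shows "DNM P = cov P (YNrv P) (XNrv P) / var P Xv"
proof -
  let ?AY = "\<Sum>n\<in>UNIV. pN P n * XN P n * YN P n"
  have "ex P (XNrv P) = ex P Xv"
    unfolding XNrv_eq ex_fun_N[OF L] ex_Xv[OF L] ..
  moreover have "ex P (\<lambda>w. 1 - XNrv P w) = 1 - ex P Xv"
    using ex_fun_N[OF L, of "\<lambda>n. 1 - XN P n"]
    by (simp add: XNrv_eq ex_Xv[OF L] sum_pN[OF L] algebra_simps sum_subtractf)
  moreover have "ex P (\<lambda>w. XNrv P w * YNrv P w) = ?AY"
    using ex_fun_N[OF L, of "\<lambda>n. XN P n * YN P n"] by (simp add: XNrv_eq YNrv_eq mult.assoc)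
  moreover have "ex P (\<lambda>w. (1 - XNrv P w) * YNrv P w) = ex P Yv - ?AY"
    using ex_fun_N[OF L, of "\<lambda>n. (1 - XN P n) * YN P n"]
    by (simp add: XNrv_eq YNrv_eq ex_Yv[OF L] algebra_simps sum_subtractf)
  ultimately have "DNM P = ?AY / ex P Xv - (ex P Yv - ?AY) / (1 - ex P Xv)"
    unfolding DNM_def by simp
  then show ?thesis
    using e unfolding cov_YNrv_XNrv[OF L] var_Xv[OF L] by (simp add: field_simps)
qed

lemma stratum_cov_Yv_Xv:
  assumes L: "joint_law P"
  shows "pN P n * ccov P Yv Xv {w. Nv w = n} = cell_moment P True n - pN P n * XN P n * YN P n"
proof (cases "pN P n = 0")
  case True
  then have "cell_prob P True n = 0"
    using pN_cells[OF L] cell_prob_nonneg[of P True n] cell_prob_nonneg[of P False n] by auto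
  then show ?thesis using True cell_moment_null[OF L] by simp
next
  case False
  have "ccov P Yv Xv {w. Nv w = n} = cexp P (\<lambda>w. (Yv w - YN P n) * (Xv w - XN P n)) {w. Nv w = n}"
    by (simp add: ccov_def YN_def XN_def)
  also have "\<dots> = ((1 - XN P n) * cell_moment P True n - XN P n * cell_moment P False n) / pN P n"
    using cexp_stratum[OF L, of "\<lambda>w. (Yv w - YN P n) * (Xv w - XN P n)"
        "\<lambda>x _. (if x then 1 else 0) - XN P n" "\<lambda>x _. - YN P n * ((if x then 1 else 0) - XN P n)" n]
    by (simp add: Xv_def cell_prob_True_eq[OF L] cell_prob_False_eq[OF L] algebra_simps)
  also have "\<dots> = (cell_moment P True n - XN P n * (cell_moment P True n + cell_moment P False n)) / pN P n"
    by (simp add: algebra_simps)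
  finally show ?thesis
    using False unfolding cell_moment_sum_eq[OF L] by simp
qed

lemma deltaB_eq:
  assumes L: "joint_law P"
  shows "deltaB P = cov P Yv Xv - cov P (YNrv P) (XNrv P)"
  unfolding deltaB_def stratum_cov_Yv_Xv[OF L] cov_Yv_Xv[OF L] cov_YNrv_XNrv[OF L]
  by (simp add: sum_subtractf)

lemma arm_cov_Yv_XNrv:
  assumes L: "joint_law P" and m: "(\<Sum>n\<in>UNIV. cell_prob P x n) \<noteq> 0"
  shows "measure P {w. fst w = x} * ccov P Yv (XNrv P) {w. fst w = x}
       = (\<Sum>n\<in>UNIV. XN P n * cell_moment P x n)
         - (\<Sum>n\<in>UNIV. cell_moment P x n) * (\<Sum>n\<in>UNIV. XN P n * cell_prob P x n)
           / (\<Sum>n\<in>UNIV. cell_prob P x n)"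
proof -
  let ?m = "\<Sum>n\<in>UNIV. cell_prob P x n"
  define c where "c = cexp P Yv {w. fst w = x}"
  define d where "d = cexp P (XNrv P) {w. fst w = x}"
  have c_eq: "c = (\<Sum>n\<in>UNIV. cell_moment P x n) / ?m"
    using cexp_arm[OF L, of Yv "\<lambda>_ _. 1" "\<lambda>_ _. 0"] by (simp add: c_def)
  have d_eq: "d = (\<Sum>n\<in>UNIV. XN P n * cell_prob P x n) / ?m"
    using cexp_arm[OF L, of "XNrv P" "\<lambda>_ _. 0" "\<lambda>_ n. XN P n"] by (simp add: d_def XNrv_def)
  have "ccov P Yv (XNrv P) {w. fst w = x}
      = (\<Sum>n\<in>UNIV. (XN P n - d) * cell_moment P x n + - c * (XN P n - d) * cell_prob P x n) / ?m"
    unfolding ccov_def c_def[symmetric] d_def[symmetric]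
    by (rule cexp_arm[OF L]) (simp add: XNrv_def algebra_simps)
  also have "\<dots> = (\<Sum>n\<in>UNIV. (XN P n - d) * (cell_moment P x n - c * cell_prob P x n)) / ?m"
    by (simp add: algebra_simps)
  finally show ?thesis
    using m sum_centered_product[OF m, of "XN P" "cell_moment P x"]
    unfolding measure_arm[OF L] c_eq d_eq by simp
qed

lemma deltaW_eq:
  assumes L: "joint_law P" and e: "0 < ex P Xv" "ex P Xv < 1"
  shows "deltaW P = cov P (YNrv P) (XNrv P) - Dgap P * var P (XNrv P)"
proof -
  let ?e = "ex P Xv" and ?E = "ex P Yv" and ?S1 = "\<Sum>n\<in>UNIV. cell_moment P True n"
  let ?A1 = "\<Sum>n\<in>UNIV. pN P n * (XN P n)\<^sup>2" and ?B1 = "\<Sum>n\<in>UNIV. XN P n * cell_moment P True n"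
  have treated: "measure P {w. fst w} * ccov P Yv (XNrv P) {w. fst w} = ?B1 - ?S1 * ?A1 / ?e"
    using arm_cov_Yv_XNrv[OF L, of True, unfolded sum_cell_prob_True[OF L]] e
    by (simp add: cell_prob_True_eq[OF L] power2_eq_square mult.commute mult.left_commute)
  have control_XN: "(\<Sum>n\<in>UNIV. XN P n * cell_prob P False n) = ?e - ?A1"
    by (simp add: cell_prob_False_eq[OF L] ex_Xv[OF L] power2_eq_square algebra_simps sum_subtractf)
  have "?B1 + (\<Sum>n\<in>UNIV. XN P n * cell_moment P False n)
      = (\<Sum>n\<in>UNIV. XN P n * (cell_moment P True n + cell_moment P False n))"
    by (simp add: distrib_left sum.distrib)
  then have control_XNY: "(\<Sum>n\<in>UNIV. XN P n * cell_moment P False n)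
      = (\<Sum>n\<in>UNIV. pN P n * XN P n * YN P n) - ?B1"
    unfolding cell_moment_sum_eq[OF L] by (simp add: ac_simps)
  have control: "measure P {w. \<not> fst w} * ccov P Yv (XNrv P) {w. \<not> fst w}
      = (\<Sum>n\<in>UNIV. pN P n * XN P n * YN P n) - ?B1 - (?E - ?S1) * (?e - ?A1) / (1 - ?e)"
    using arm_cov_Yv_XNrv[OF L, of False, unfolded sum_cell_prob_False[OF L]] e
    by (simp add: control_XN control_XNY sum_cell_moment_False[OF L])
  show ?thesis
    using e unfolding deltaW_def sum_UNIV_bool
    by (simp add: treated control Dgap_eq[OF L e] cov_Yv_Xv[OF L] var_Xv[OF L]
        cov_YNrv_XNrv[OF L] var_XNrv[OF L] field_simps power2_eq_square)
qed

lemma same_observed_stats: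
  assumes P: "joint_law P" and Q: "joint_law Q" and obs: "same_observed P Q"
  shows "ex Q Xv = ex P Xv" "ex Q Yv = ex P Yv" "var Q Xv = var P Xv"
    "var Q (XNrv Q) = var P (XNrv P)" "cov Q (YNrv Q) (XNrv Q) = cov P (YNrv P) (XNrv P)"
  using same_observed_eqs[OF obs]
  by (simp_all add: ex_Xv ex_Yv var_Xv var_XNrv cov_YNrv_XNrv P Q)

lemma overlap_bounds:
  assumes L: "joint_law P" and "\<exists>n. pN P n > 0 \<and> 0 < XN P n \<and> XN P n < 1"
  shows "0 < ex P Xv \<and> ex P Xv < 1 \<and> var P (XNrv P) < var P Xv"
proof -
  obtain n where n: "pN P n > 0" "0 < XN P n" "XN P n < 1" using assms(2) by blast
  have nonneg: "0 \<le> pN P m" "0 \<le> XN P m" "0 \<le> 1 - XN P m" for m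
    using XN_bounds[OF L, of m] by (simp_all add: pN_def)
  have pos_sum: "0 < (\<Sum>m\<in>UNIV. pN P m * h m)" if "\<And>m. 0 \<le> h m" "0 < h n" for h
  proof -
    have "0 < pN P n * h n" using n(1) that(2) by simp
    also have "\<dots> \<le> (\<Sum>m\<in>UNIV. pN P m * h m)"
      using nonneg(1) that(1) by (intro member_le_sum) auto
    finally show ?thesis .
  qed
  have "0 < ex P Xv"
    unfolding ex_Xv[OF L] using n nonneg by (intro pos_sum) auto
  moreover have "1 - ex P Xv = (\<Sum>m\<in>UNIV. pN P m * (1 - XN P m))"
    by (simp add: ex_Xv[OF L] sum_pN[OF L] right_diff_distrib sum_subtractf)
  moreover have "0 < (\<Sum>m\<in>UNIV. pN P m * (1 - XN P m))"
    using n nonneg by (intro pos_sum) auto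
  moreover have "var P Xv - var P (XNrv P) = (\<Sum>m\<in>UNIV. pN P m * (XN P m * (1 - XN P m)))"
    by (simp add: var_Xv[OF L] var_XNrv[OF L] ex_Xv[OF L] power2_eq_square algebra_simps
        sum_subtractf)
  moreover have "0 < (\<Sum>m\<in>UNIV. pN P m * (XN P m * (1 - XN P m)))"
    using n nonneg by (intro pos_sum) auto
  ultimately show ?thesis by linarith
qed

(* The largest and smallest values of E[XY; N = n] compatible with p\<^sub>n, X\<^sub>n, Y\<^sub>n
  and the bounds on the cell means: D\<^sup>+\<^sub>M\<^sub>O\<^sub>B and D\<^sup>-\<^sub>M\<^sub>O\<^sub>B are the values of the gap at these extremes. *)

definition treated_moment_upper :: "'n outcome measure \<Rightarrow> real \<Rightarrow> real \<Rightarrow> 'n \<Rightarrow> real" where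
  "treated_moment_upper P yl yh n = pN P n * min (YN P n - yl * (1 - XN P n)) (yh * XN P n)"

definition treated_moment_lower :: "'n outcome measure \<Rightarrow> real \<Rightarrow> real \<Rightarrow> 'n \<Rightarrow> real" where
  "treated_moment_lower P yl yh n = pN P n * (YN P n - min (YN P n - yl * XN P n) (yh * (1 - XN P n)))"

lemma DMOBp_eq:
  "joint_law P \<Longrightarrow> DMOBp P yl yh
     = ((\<Sum>n\<in>UNIV. treated_moment_upper P yl yh n) - ex P Xv * ex P Yv) / var P Xv"
  using ex_fun_N[of P "\<lambda>n. min (YN P n - yl * (1 - XN P n)) (yh * XN P n)"]
  by (simp add: DMOBp_def XNrv_eq YNrv_eq treated_moment_upper_def)

lemma DMOBm_eq:
  assumes L: "joint_law P"
  shows "DMOBm P yl yh = ((\<Sum>n\<in>UNIV. treated_moment_lower P yl yh n) - ex P Xv * ex P Yv) / var P Xv"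
proof -
  have "(\<Sum>n\<in>UNIV. treated_moment_lower P yl yh n)
      = ex P Yv - ex P (\<lambda>w. min (YNrv P w - yl * XNrv P w) (yh * (1 - XNrv P w)))"
    using ex_fun_N[OF L, of "\<lambda>n. min (YN P n - yl * XN P n) (yh * (1 - XN P n))"]
    by (simp add: XNrv_eq YNrv_eq treated_moment_lower_def ex_Yv[OF L] right_diff_distrib
        sum_subtractf)
  then show ?thesis
    unfolding DMOBm_def by (simp add: algebra_simps)
qed

lemma cell_split_bounds_iff:
  assumes L: "joint_law P"
  shows "(yl * cell_prob P True n \<le> f \<and> f \<le> yh * cell_prob P True n
          \<and> yl * cell_prob P False n \<le> pN P n * YN P n - f \<and> pN P n * YN P n - f \<le> yh * cell_prob P False n)
     \<longleftrightarrow> (treated_moment_lower P yl yh n \<le> f \<and> f \<le> treated_moment_upper P yl yh n)"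
  unfolding cell_prob_True_eq[OF L] cell_prob_False_eq[OF L] treated_moment_lower_def
    treated_moment_upper_def
  by (rule split_bounds_iff) (simp add: pN_def)

lemma cond_mean_bounds_iff:
  assumes L: "joint_law P"
  shows "cond_mean_bounds P yl yh
     \<longleftrightarrow> (\<forall>x n. yl * cell_prob P x n \<le> cell_moment P x n \<and> cell_moment P x n \<le> yh * cell_prob P x n)"
proof -
  have "yl * cell_prob P x n \<le> cell_moment P x n \<and> cell_moment P x n \<le> yh * cell_prob P x n
     \<longleftrightarrow> (0 < cell_prob P x n \<longrightarrow> yl \<le> cexp P Yv (cell x n) \<and> cexp P Yv (cell x n) \<le> yh)" for x n
  proof (cases "cell_prob P x n = 0")
    case True
    then show ?thesis using cell_moment_null[OF L] by simp
  next
    case False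
    then have "0 < cell_prob P x n" using cell_prob_nonneg[of P x n] by simp
    then show ?thesis
      unfolding cexp_cell[OF L] by (simp add: field_simps)
  qed
  then show ?thesis
    unfolding cond_mean_bounds_def cell_prob_def by blast
qed

lemma treated_moment_bounds:
  assumes L: "joint_law P" and B: "cond_mean_bounds P yl yh"
  shows "treated_moment_lower P yl yh n \<le> cell_moment P True n
       \<and> cell_moment P True n \<le> treated_moment_upper P yl yh n"
proof -
  have "cell_moment P False n = pN P n * YN P n - cell_moment P True n"
    using cell_moment_sum_eq[OF L, of n] by simp
  then show ?thesis
    using B unfolding cond_mean_bounds_iff[OF L] cell_split_bounds_iff[OF L, symmetric] by metis
qed

lemma homogeneous_treated_moment_bounds:
  assumes L: "joint_law P" and B: "cond_mean_bounds P yl yh"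
  shows "treated_moment_lower P yl yh n \<le> pN P n * XN P n * YN P n
       \<and> pN P n * XN P n * YN P n \<le> treated_moment_upper P yl yh n"
proof -
  have cell: "yl * cell_prob P x n \<le> cell_moment P x n \<and> cell_moment P x n \<le> yh * cell_prob P x n" for x
    using B unfolding cond_mean_bounds_iff[OF L] by blast
  have pN_scaled: "c * pN P n = c * cell_prob P True n + c * cell_prob P False n" for c
    by (simp add: pN_cells[OF L] distrib_left)
  have "yl * pN P n \<le> pN P n * YN P n \<and> pN P n * YN P n \<le> yh * pN P n"
    using cell[of True] cell[of False] pN_scaled[of yl] pN_scaled[of yh] cell_moment_sum_eq[OF L, of n]
    by linarith
  moreover have "0 \<le> XN P n" "0 \<le> 1 - XN P n" using XN_bounds[OF L] by auto
  ultimately have "(yl * pN P n) * XN P n \<le> (pN P n * YN P n) * XN P n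
      \<and> (pN P n * YN P n) * XN P n \<le> (yh * pN P n) * XN P n
      \<and> (yl * pN P n) * (1 - XN P n) \<le> (pN P n * YN P n) * (1 - XN P n)
      \<and> (pN P n * YN P n) * (1 - XN P n) \<le> (yh * pN P n) * (1 - XN P n)"
    by (simp add: mult_right_mono)
  then show ?thesis
    unfolding cell_split_bounds_iff[OF L, symmetric] cell_prob_True_eq[OF L] cell_prob_False_eq[OF L]
    by (simp add: algebra_simps)
qed

lemma Dgap_DNM_MOB_bounds:
  assumes L: "joint_law P" and B: "cond_mean_bounds P yl yh" and e: "0 < ex P Xv" "ex P Xv < 1"
  shows "DMOBm P yl yh \<le> Dgap P" "Dgap P \<le> DMOBp P yl yh"
    and "DMOBm P yl yh \<le> DNM P" "DNM P \<le> DMOBp P yl yh"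
proof -
  have V: "0 < var P Xv" using e by (simp add: var_Xv[OF L])
  have "(\<Sum>n\<in>UNIV. treated_moment_lower P yl yh n) \<le> (\<Sum>n\<in>UNIV. cell_moment P True n)"
    "(\<Sum>n\<in>UNIV. cell_moment P True n) \<le> (\<Sum>n\<in>UNIV. treated_moment_upper P yl yh n)"
    "(\<Sum>n\<in>UNIV. treated_moment_lower P yl yh n) \<le> (\<Sum>n\<in>UNIV. pN P n * XN P n * YN P n)"
    "(\<Sum>n\<in>UNIV. pN P n * XN P n * YN P n) \<le> (\<Sum>n\<in>UNIV. treated_moment_upper P yl yh n)"
    using treated_moment_bounds[OF L B] homogeneous_treated_moment_bounds[OF L B]
    by (auto intro: sum_mono)
  then show "DMOBm P yl yh \<le> Dgap P" "Dgap P \<le> DMOBp P yl yh"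
    and "DMOBm P yl yh \<le> DNM P" "DNM P \<le> DMOBp P yl yh"
    using V unfolding DMOBm_eq[OF L] DMOBp_eq[OF L] Dgap_eq[OF L e] DNM_eq[OF L e]
      cov_Yv_Xv[OF L] cov_YNrv_XNrv[OF L]
    by (simp_all add: divide_right_mono)
qed

lemma exists_law_with_cell_moments:
  assumes L: "joint_law P" and null: "\<And>x n. cell_prob P x n = 0 \<Longrightarrow> t x n = 0"
  shows "\<exists>Q. joint_law Q \<and> cell_prob Q = cell_prob P \<and> cell_moment Q = t"
proof -
  interpret prob_space P using joint_law_prob_space[OF L] .
  define \<mu> where "\<mu> x n = t x n / cell_prob P x n" for x n
  define \<phi> :: "'a outcome \<Rightarrow> 'a outcome" where "\<phi> w = (fst w, \<mu> (fst w) (Nv w), Nv w)" for w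
  have "\<phi> \<in> measurable outcome_space outcome_space"
    unfolding \<phi>_def Nv_def by (intro measurable_Pair measurable_cell_function[unfolded Nv_def]) simp_all
  then have \<phi>_meas: "\<phi> \<in> measurable P outcome_space"
    using measurable_cong_sets[OF joint_law_sets[OF L] refl] by blast
  define Q where "Q = distr P outcome_space \<phi>"
  have Y_meas: "Yv \<in> borel_measurable (outcome_space :: 'a outcome measure)"
    unfolding Yv_def by simp
  have cell_meas: "cell x n \<in> sets (outcome_space :: 'a outcome measure)" for x n
    using sets_cell_event[OF L, of "\<lambda>x' n'. x' = x \<and> n' = n"] joint_law_sets[OF L] by simp
  have cell_vimage: "\<phi> -` cell x n = cell x n" for x n
    by (auto simp: \<phi>_def Nv_def)
  have LQ: "joint_law Q"
    unfolding joint_law_def Q_def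
    using prob_space_distr[OF \<phi>_meas] integrable_distr_eq[OF \<phi>_meas Y_meas]
      integrable_cell_function[OF L, of \<mu>]
    by (simp add: \<phi>_def Yv_def)
  have "cell_prob Q x n = cell_prob P x n" for x n
    unfolding cell_prob_def Q_def measure_distr[OF \<phi>_meas cell_meas] cell_vimage
    using joint_law_space[OF L] by simp
  moreover have "cell_moment Q x n = t x n" for x n
  proof -
    have "cell_moment Q x n = (\<integral>w. indicator (cell x n) (\<phi> w) * Yv (\<phi> w) \<partial>P)"
      unfolding cell_moment_def Q_def
      by (rule integral_distr[OF \<phi>_meas]) (use Y_meas cell_meas in measurable)
    also have "\<dots> = (\<integral>w. \<mu> x n * indicator (cell x n) w \<partial>P)"
    proof (rule Bochner_Integration.integral_cong)
      fix w
      show "indicator (cell x n) (\<phi> w) * Yv (\<phi> w) = \<mu> x n * indicator (cell x n) w"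
        by (cases "fst w = x \<and> Nv w = n") (simp_all add: \<phi>_def Yv_def Nv_def)
    qed simp
    also have "\<dots> = t x n"
      using joint_law_space[OF L] null[of x n] by (auto simp: \<mu>_def cell_prob_def)
    finally show ?thesis .
  qed
  ultimately show ?thesis using LQ by blast
qed

lemma exists_law_with_treated_moment:
  assumes L: "joint_law P" and B: "cond_mean_bounds P yl yh"
    and T: "(\<Sum>n\<in>UNIV. treated_moment_lower P yl yh n) \<le> T" "T \<le> (\<Sum>n\<in>UNIV. treated_moment_upper P yl yh n)"
  shows "\<exists>Q. joint_law Q \<and> same_observed P Q \<and> cond_mean_bounds Q yl yh
             \<and> (\<Sum>n\<in>UNIV. cell_moment Q True n) = T"
proof -
  obtain f where f: "\<And>n. treated_moment_lower P yl yh n \<le> f n \<and> f n \<le> treated_moment_upper P yl yh n"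
    and f_sum: "(\<Sum>n\<in>UNIV. f n) = T"
  proof -
    have "treated_moment_lower P yl yh n \<le> treated_moment_upper P yl yh n" for n
      using treated_moment_bounds[OF L B, of n] by linarith
    then show ?thesis
      using sum_interpolate[of UNIV, OF _ T] that by blast
  qed
  define t where "t x n = (if x then f n else pN P n * YN P n - f n)" for x n
  have t_bounds: "yl * cell_prob P x n \<le> t x n \<and> t x n \<le> yh * cell_prob P x n" for x n
  proof -
    have "yl * cell_prob P True n \<le> f n \<and> f n \<le> yh * cell_prob P True n
        \<and> yl * cell_prob P False n \<le> pN P n * YN P n - f n
        \<and> pN P n * YN P n - f n \<le> yh * cell_prob P False n"
      using cell_split_bounds_iff[OF L, where f="f n"] f[of n] by blast
    then show ?thesis by (cases x) (simp_all add: t_def)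
  qed
  have "cell_prob P x n = 0 \<Longrightarrow> t x n = 0" for x n
    using t_bounds[of x n] by simp
  then obtain Q where Q: "joint_law Q" "cell_prob Q = cell_prob P" "cell_moment Q = t"
    using exists_law_with_cell_moments[OF L] by blast
  have pN: "pN Q n = pN P n" for n
    by (simp add: pN_cells[OF Q(1)] pN_cells[OF L] Q(2))
  have "YN Q n = pN P n * YN P n / pN P n" for n
    by (simp add: YN_cells[OF Q(1)] pN Q(3) t_def)
  also have "pN P n * YN P n / pN P n = YN P n" for n
    using YN_cells[OF L, of n] unfolding cell_moment_sum_eq[OF L] by (rule sym)
  finally have "YN Q n = YN P n" for n .
  then have "same_observed P Q"
    unfolding same_observed_def by (simp add: pN XN_cells[OF Q(1)] XN_cells[OF L] Q(2))
  moreover have "cond_mean_bounds Q yl yh"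
    unfolding cond_mean_bounds_iff[OF Q(1)] Q(2,3) using t_bounds by blast
  moreover have "(\<Sum>n\<in>UNIV. cell_moment Q True n) = T"
    using f_sum by (simp add: Q(3) t_def)
  ultimately show ?thesis using Q(1) by blast
qed

lemma Dgap_sharp:
  assumes L: "joint_law P" and B: "cond_mean_bounds P yl yh"
    and e: "0 < ex P Xv" "ex P Xv < 1"
    and d: "DMOBm P yl yh \<le> d" "d \<le> DMOBp P yl yh"
  shows "\<exists>Q. joint_law Q \<and> same_observed P Q \<and> cond_mean_bounds Q yl yh \<and> Dgap Q = d"
proof -
  let ?V = "var P Xv" and ?T = "d * var P Xv + ex P Xv * ex P Yv"
  have V: "0 < ?V" using e by (simp add: var_Xv[OF L])
  have "(\<Sum>n\<in>UNIV. treated_moment_lower P yl yh n) \<le> ?T"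
    using d(1) V by (simp add: DMOBm_eq[OF L] divide_le_eq)
  moreover have "?T \<le> (\<Sum>n\<in>UNIV. treated_moment_upper P yl yh n)"
    using d(2) V by (simp add: DMOBp_eq[OF L] le_divide_eq)
  ultimately obtain Q where Q: "joint_law Q" "same_observed P Q" "cond_mean_bounds Q yl yh"
    and T: "(\<Sum>n\<in>UNIV. cell_moment Q True n) = ?T"
    using exists_law_with_treated_moment[OF L B] by blast
  note stats = same_observed_stats[OF L Q(1,2)]
  have "Dgap Q = cov Q Yv Xv / var Q Xv"
    using e by (intro Dgap_eq[OF Q(1)]) (simp_all add: stats)
  also have "\<dots> = d"
    using V unfolding cov_Yv_Xv[OF Q(1)] T stats by simp
  finally have "Dgap Q = d" .
  with Q show ?thesis by blast
qed

lemma reinforcement_iff_between: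
  assumes L: "joint_law P" and e: "0 < ex P Xv" "ex P Xv < 1" and W: "0 < var P (XNrv P)"
  shows "0 \<le> deltaW P * deltaB P
     \<longleftrightarrow> (DNM P \<le> Dgap P \<and> Dgap P \<le> DER P) \<or> (DER P \<le> Dgap P \<and> Dgap P \<le> DNM P)"
proof -
  have V: "0 < var P Xv" using e by (simp add: var_Xv[OF L])
  have "deltaB P = Dgap P * var P Xv - cov P (YNrv P) (XNrv P)"
    using V by (simp add: deltaB_eq[OF L] Dgap_eq[OF L e])
  then show ?thesis
    using mult_nonneg_iff_between[OF V W, of "cov P (YNrv P) (XNrv P)" "Dgap P"]
    by (simp add: deltaW_eq[OF L e] DNM_eq[OF L e] DER_def)
qed

lemma DNM_le_DER_iff:
  assumes L: "joint_law P" and e: "0 < ex P Xv" "ex P Xv < 1"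
    and W: "0 < var P (XNrv P)" "var P (XNrv P) < var P Xv"
  shows "DNM P \<le> DER P \<longleftrightarrow> 0 \<le> DNM P" and "DER P \<le> DNM P \<longleftrightarrow> DNM P \<le> 0"
proof -
  let ?C = "cov P (YNrv P) (XNrv P)"
  have V: "0 < var P Xv" using W by simp
  show "DNM P \<le> DER P \<longleftrightarrow> 0 \<le> DNM P"
    using divide_le_divide_larger_iff[OF W, of ?C] V
    by (simp add: DNM_eq[OF L e] DER_def zero_le_divide_iff)
  show "DER P \<le> DNM P \<longleftrightarrow> DNM P \<le> 0"
    using divide_le_divide_larger_iff[OF W, of "- ?C"] V
    by (simp add: DNM_eq[OF L e] DER_def divide_le_0_iff)
qed

lemma sharp_under_reinforcement:
  assumes L: "joint_law P" and B: "cond_mean_bounds P yl yh"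
    and e: "0 < ex P Xv" "ex P Xv < 1" and W: "0 < var P (XNrv P)"
    and d: "DMOBm P yl yh \<le> d" "d \<le> DMOBp P yl yh"
    and between: "(DNM P \<le> d \<and> d \<le> DER P) \<or> (DER P \<le> d \<and> d \<le> DNM P)"
  shows "\<exists>Q. joint_law Q \<and> same_observed P Q \<and> cond_mean_bounds Q yl yh
             \<and> 0 \<le> deltaW Q * deltaB Q \<and> Dgap Q = d"
proof -
  obtain Q where Q: "joint_law Q" "same_observed P Q" "cond_mean_bounds Q yl yh" "Dgap Q = d"
    using Dgap_sharp[OF L B e d] by blast
  note stats = same_observed_stats[OF L Q(1,2)]
  have eQ: "0 < ex Q Xv" "ex Q Xv < 1" and WQ: "0 < var Q (XNrv Q)"
    using e W by (simp_all add: stats)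
  have "DNM Q = DNM P" "DER Q = DER P"
    by (simp_all add: DNM_eq[OF L e] DNM_eq[OF Q(1) eQ] DER_def stats)
  then have "0 \<le> deltaW Q * deltaB Q"
    using reinforcement_iff_between[OF Q(1) eQ WQ] between Q(4) by simp
  with Q show ?thesis by blast
qed

theorem proposition8:
  fixes P :: "('n::finite) outcome measure" and Ylow Yhigh :: real
  assumes law: "joint_law P"
    and overlap: "\<exists>n. pN P n > 0 \<and> 0 < XN P n \<and> XN P n < 1"
    and Yle: "Ylow \<le> Yhigh"
    and bounds: "cond_mean_bounds P Ylow Yhigh"
    and varpos: "var P (XNrv P) > 0"
    and reinf: "deltaW P * deltaB P \<ge> 0"
  shows "(DER P \<ge> DNM P \<longrightarrow>
            0 \<le> DNM P \<and> DNM P \<le> Dgap P \<and> Dgap P \<le> min (DMOBp P Ylow Yhigh) (DER P))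
       \<and> (DER P \<le> DNM P \<longrightarrow>
            max (DMOBm P Ylow Yhigh) (DER P) \<le> Dgap P \<and> Dgap P \<le> DNM P \<and> DNM P \<le> 0)
       \<and> (DER P \<ge> DNM P \<longrightarrow>
            (\<forall>d. DNM P \<le> d \<and> d \<le> min (DMOBp P Ylow Yhigh) (DER P) \<longrightarrow>
               (\<exists>Q :: 'n outcome measure. joint_law Q \<and> same_observed P Q \<and>
                  cond_mean_bounds Q Ylow Yhigh \<and> deltaW Q * deltaB Q \<ge> 0 \<and> Dgap Q = d)))
       \<and> (DER P \<le> DNM P \<longrightarrow>
            (\<forall>d. max (DMOBm P Ylow Yhigh) (DER P) \<le> d \<and> d \<le> DNM P \<longrightarrow>
               (\<exists>Q :: 'n outcome measure. joint_law Q \<and> same_observed P Q \<and>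
                  cond_mean_bounds Q Ylow Yhigh \<and> deltaW Q * deltaB Q \<ge> 0 \<and> Dgap Q = d)))"
proof -
  obtain e: "0 < ex P Xv" "ex P Xv < 1" and WV: "var P (XNrv P) < var P Xv"
    using overlap_bounds[OF law overlap] by blast
  have between: "(DNM P \<le> Dgap P \<and> Dgap P \<le> DER P) \<or> (DER P \<le> Dgap P \<and> Dgap P \<le> DNM P)"
    using reinforcement_iff_between[OF law e varpos] reinf by simp
  note sign = DNM_le_DER_iff[OF law e varpos WV]
  note mob = Dgap_DNM_MOB_bounds[OF law bounds e]
  note sharp = sharp_under_reinforcement[OF law bounds e varpos]
  have "0 \<le> DNM P \<and> DNM P \<le> Dgap P \<and> Dgap P \<le> min (DMOBp P Ylow Yhigh) (DER P)"
    if "DNM P \<le> DER P" using that sign between mob by auto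
  moreover have "max (DMOBm P Ylow Yhigh) (DER P) \<le> Dgap P \<and> Dgap P \<le> DNM P \<and> DNM P \<le> 0"
    if "DER P \<le> DNM P" using that sign between mob by auto
  moreover have "\<exists>Q. joint_law Q \<and> same_observed P Q \<and> cond_mean_bounds Q Ylow Yhigh
      \<and> 0 \<le> deltaW Q * deltaB Q \<and> Dgap Q = d"
    if "DNM P \<le> d \<and> d \<le> min (DMOBp P Ylow Yhigh) (DER P)
        \<or> max (DMOBm P Ylow Yhigh) (DER P) \<le> d \<and> d \<le> DNM P" for d
    using that mob by (intro sharp) auto
  ultimately show ?thesis by blast
qed

end
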